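(* Let $k\ge 0$ and let $G=F_k$, of order $n=4k+3$. Then (a) $\gamma_t(G)=(n+1)/2$. Moreover, if $k\ge 1$ and $w\in\{v_1,v_2,v_3\}$ (the three subdivision vertices on the path $a_1v_1v_2v_3c_1$), then (b) $\gamma_t(G-w)=(n-1)/2$ and (c) $\gamma_t^a(G;w)=(n-1)/2$.
   Context: For a graph $G$ with no isolated vertex, a total dominating set (TD-set) is a set $S\subseteq V(G)$ such that every vertex of $G$ is adjacent to some vertex of $S$; $\gamma_t(G)$ is the minimum cardinality of a TD-set. For a vertex $v$ of $G$, an almost total dominating set (ATD-set) of $G$ with respect to $v$ is a set $S\subseteq V(G)$ with $v\in S$ such that every vertex different from $v$ is adjacent to a vertex of $S$ and $v$ has no neighbor in $S$; $\gamma_t^a(G;v)$ is its minimum cardinality. For $k\ge 1$, $G_k$ is the graph with vertex set $\{a_i,b_i,c_i,d_i:1\le i\le k\}$ whose edges are: the edges of the path $a_1b_1a_2b_2\cdots a_kb_k$, the edges of the path $c_1d_1c_2d_2\cdots c_kd_k$, the edges $a_id_i$ and $b_ic_i$ for every $1\le i\le k$, and the two edges $a_1c_1$ and $b_kd_k$. $F_0=C_3$, and for $k\ge1$, $F_k$ is obtained from $G_k$ by replacing the edge $a_1c_1$ by a path $a_1v_1v_2v_3c_1$ through three new vertices $v_1,v_2,v_3$. *)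

theory Defs
  imports Complex_Main
begin

text \<open>Simple graphs are given by a vertex set V and a symmetric adjacency predicate E.\<close>

definition is_TDS :: "'a set \<Rightarrow> ('a \<Rightarrow> 'a \<Rightarrow> bool) \<Rightarrow> 'a set \<Rightarrow> bool" where
  "is_TDS V E S \<longleftrightarrow> S \<subseteq> V \<and> (\<forall>x\<in>V. \<exists>u\<in>S. E x u)"

definition gamma_t :: "'a set \<Rightarrow> ('a \<Rightarrow> 'a \<Rightarrow> bool) \<Rightarrow> nat" where
  "gamma_t V E = (LEAST m. \<exists>S. is_TDS V E S \<and> card S = m)"

definition is_ATDS :: "'a set \<Rightarrow> ('a \<Rightarrow> 'a \<Rightarrow> bool) \<Rightarrow> 'a \<Rightarrow> 'a set \<Rightarrow> bool" where
  "is_ATDS V E v S \<longleftrightarrow> S \<subseteq> V \<and> v \<in> S \<and> (\<forall>x\<in>V - {v}. \<exists>u\<in>S. E x u)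
     \<and> \<not> (\<exists>u\<in>S. E v u)"

definition gamma_ta :: "'a set \<Rightarrow> ('a \<Rightarrow> 'a \<Rightarrow> bool) \<Rightarrow> 'a \<Rightarrow> nat" where
  "gamma_ta V E v = (LEAST m. \<exists>S. is_ATDS V E v S \<and> card S = m)"

definition del_vertex_adj :: "'a set \<Rightarrow> ('a \<Rightarrow> 'a \<Rightarrow> bool) \<Rightarrow> 'a \<Rightarrow> 'a \<Rightarrow> 'a \<Rightarrow> bool" where
  "del_vertex_adj V E w x y \<longleftrightarrow> x \<in> V - {w} \<and> y \<in> V - {w} \<and> E x y"

datatype vtx = A nat | B nat | C nat | D nat | Vs nat

text \<open>Edges of G_k (as unordered pairs listed once).\<close>
definition G_edges :: "nat \<Rightarrow> (vtx \<times> vtx) set" where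
  "G_edges k =
     {(A i, B i) | i. 1 \<le> i \<and> i \<le> k} \<union> {(B i, A (i+1)) | i. 1 \<le> i \<and> i < k}
   \<union> {(C i, D i) | i. 1 \<le> i \<and> i \<le> k} \<union> {(D i, C (i+1)) | i. 1 \<le> i \<and> i < k}
   \<union> {(A i, D i) | i. 1 \<le> i \<and> i \<le> k} \<union> {(B i, C i) | i. 1 \<le> i \<and> i \<le> k}
   \<union> {(A 1, C 1), (B k, D k)}"

definition F_verts :: "nat \<Rightarrow> vtx set" where
  "F_verts k = (if k = 0 then {Vs 1, Vs 2, Vs 3}
     else {A i | i. 1 \<le> i \<and> i \<le> k} \<union> {B i | i. 1 \<le> i \<and> i \<le> k}
        \<union> {C i | i. 1 \<le> i \<and> i \<le> k} \<union> {D i | i. 1 \<le> i \<and> i \<le> k}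
        \<union> {Vs 1, Vs 2, Vs 3})"

definition F_edges :: "nat \<Rightarrow> (vtx \<times> vtx) set" where
  "F_edges k = (if k = 0 then {(Vs 1, Vs 2), (Vs 2, Vs 3), (Vs 3, Vs 1)}
     else (G_edges k - {(A 1, C 1)})
        \<union> {(A 1, Vs 1), (Vs 1, Vs 2), (Vs 2, Vs 3), (Vs 3, C 1)})"

definition F_adj :: "nat \<Rightarrow> vtx \<Rightarrow> vtx \<Rightarrow> bool" where
  "F_adj k x y \<longleftrightarrow> (x, y) \<in> F_edges k \<or> (y, x) \<in> F_edges k"

end

theory Submission
  imports Defs
begin

(* All three values are sandwiched between an explicit
   witness set and a counting lower bound.

   Group the vertices into levels: level i >= 1 is {b_i, d_i} plus
   {a_i, c_i}; level 0 is {v_1, v_3} plus {v_2}.  If S dominates the ladder vertices,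
   local arguments show that a level whose b/d-pair is missed forces the previous
   b/d-pair into S, and a missed a/c-pair forces the next a/c-pair into S.  A general
   counting lemma for such chains of natural numbers then yields
   |S| >= 2k + (bonus from the path vertices), and a short case analysis at v_1, v_2,
   v_3 gives the bonus 2 for TD-sets of F_k and 1 for sets that only need to dominate
   all vertices but one path vertex w (covering both G - w and ATD-sets for w).

   Upper bound.  Choosing one edge of every rung 4-cycle, plus one or two path
   vertices, gives TD-sets (resp. ATD-sets) of size 2k + 2 (resp. 2k + 1). *)

definition dominates :: "('a \<Rightarrow> 'a \<Rightarrow> bool) \<Rightarrow> 'a set \<Rightarrow> 'a set \<Rightarrow> bool" where
  "dominates E S X \<longleftrightarrow> (\<forall>x\<in>X. \<exists>u\<in>S. E x u)"

lemma gamma_t_eqI: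
  assumes "\<exists>S. is_TDS V E S \<and> card S = m" "\<And>S. is_TDS V E S \<Longrightarrow> m \<le> card S"
  shows "gamma_t V E = m"
  unfolding gamma_t_def by (rule Least_equality) (use assms in auto)

lemma gamma_ta_eqI:
  assumes "\<exists>S. is_ATDS V E v S \<and> card S = m" "\<And>S. is_ATDS V E v S \<Longrightarrow> m \<le> card S"
  shows "gamma_ta V E v = m"
  unfolding gamma_ta_def by (rule Least_equality) (use assms in auto)

(* In a loopless graph a TD-set has two distinct elements: a neighbour u of some vertex,
   and a neighbour of u.  This settles the triangle F_0. *)
lemma TDS_card_ge_2:
  assumes "is_TDS V E S" "finite V" "V \<noteq> {}" "\<And>x. \<not> E x x"
  shows "2 \<le> card S"
proof -
  obtain x where "x \<in> V" using assms(3) by blast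
  then obtain u where u: "u \<in> S" "E x u" using assms(1) by (auto simp: is_TDS_def)
  then obtain u' where u': "u' \<in> S" "E u u'" using assms(1) by (auto simp: is_TDS_def)
  have "finite S" using assms(1,2) finite_subset by (auto simp: is_TDS_def)
  moreover have "u \<noteq> u'" using u'(2) assms(4) by auto
  ultimately show ?thesis using u(1) u'(1)
    by (metis card_2_iff card_mono empty_subsetI insert_subset)
qed

lemma chain_sum_forward:
  fixes x :: "nat \<Rightarrow> nat"
  assumes "l \<le> m" "\<And>i. l \<le> i \<Longrightarrow> i < m \<Longrightarrow> x (Suc i) = 0 \<Longrightarrow> 2 \<le> x i"
  shows "m - l + 1 + of_bool (2 \<le> x m) \<le> (\<Sum>j=l..m. x j) + of_bool (x l = 0)"
  using assms(1)
proof (induction m rule: dec_induct)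
  case base
  show ?case by auto
next
  case (step n)
  have "(\<Sum>j=l..Suc n. x j) = (\<Sum>j=l..n. x j) + x (Suc n)"
    using step.hyps by (simp add: sum.cl_ivl_Suc)
  moreover have "x (Suc n) = 0 \<Longrightarrow> 2 \<le> x n" using assms(2) step.hyps by simp
  ultimately show ?case using step.IH step.hyps
    by (cases "x (Suc n) = 0") (auto simp: Suc_diff_le split: if_splits)
qed

lemma chain_sum_backward:
  fixes x :: "nat \<Rightarrow> nat"
  assumes "l \<le> m" "\<And>i. l \<le> i \<Longrightarrow> i < m \<Longrightarrow> x i = 0 \<Longrightarrow> 2 \<le> x (Suc i)"
  shows "m - l + 1 + of_bool (2 \<le> x l) \<le> (\<Sum>j=l..m. x j) + of_bool (x m = 0)"
proof -
  define y where "y i = x (m + l - i)" for i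
  have "m - l + 1 + of_bool (2 \<le> y m) \<le> (\<Sum>j=l..m. y j) + of_bool (y l = 0)"
  proof (rule chain_sum_forward[OF assms(1)])
    fix i assume "l \<le> i" "i < m" "y (Suc i) = 0"
    then show "2 \<le> y i"
      using assms(2)[of "m + l - Suc i"] by (simp add: y_def Suc_diff_Suc)
  qed
  moreover have "(\<Sum>j=l..m. y j) = (\<Sum>j=l..m. x j)"
    unfolding y_def by (rule sum.atLeastAtMost_rev[symmetric])
  ultimately show ?thesis using assms(1) by (simp add: y_def)
qed

lemma F_verts_eq:
  "1 \<le> k \<Longrightarrow> F_verts k = A ` {1..k} \<union> B ` {1..k} \<union> C ` {1..k} \<union> D ` {1..k} \<union> {Vs 1, Vs 2, Vs 3}"
  by (auto simp: F_verts_def)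

lemma finite_F_verts: "finite (F_verts k)"
  by (cases "k = 0") (simp_all add: F_verts_def F_verts_eq)

lemma card_F_verts: "card (F_verts k) = 4 * k + 3"
proof (cases "k = 0")
  case True
  then show ?thesis by (simp add: F_verts_def)
next
  case False
  then have k: "1 \<le> k" by simp
  have "card (A ` {1..k}) = k" "card (B ` {1..k}) = k" "card (C ` {1..k}) = k" "card (D ` {1..k}) = k"
    by (simp_all add: card_image inj_on_def)
  then show ?thesis unfolding F_verts_eq[OF k]
    by (subst card_Un_disjoint, auto)+
qed

context
  fixes k i :: nat
  assumes k: "1 \<le> k" and i: "1 \<le> i" "i \<le> k"
begin

lemma adj_A: "F_adj k (A i) y \<longleftrightarrow> y = B i \<or> y = D i \<or> y = (if i = 1 then Vs 1 else B (i - 1))"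
  using k i by (auto simp: F_adj_def F_edges_def G_edges_def)

lemma adj_B: "F_adj k (B i) y \<longleftrightarrow> y = A i \<or> y = C i \<or> y = (if i = k then D k else A (i + 1))"
  using k i by (auto simp: F_adj_def F_edges_def G_edges_def)

lemma adj_C: "F_adj k (C i) y \<longleftrightarrow> y = B i \<or> y = D i \<or> y = (if i = 1 then Vs 3 else D (i - 1))"
  using k i by (auto simp: F_adj_def F_edges_def G_edges_def)

lemma adj_D: "F_adj k (D i) y \<longleftrightarrow> y = A i \<or> y = C i \<or> y = (if i = k then B k else C (i + 1))"
  using k i by (auto simp: F_adj_def F_edges_def G_edges_def)

end

lemma adj_Vs:
  assumes "1 \<le> k"
  shows "F_adj k (Vs 1) y \<longleftrightarrow> y = A 1 \<or> y = Vs 2"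
    and "F_adj k (Vs 2) y \<longleftrightarrow> y = Vs 1 \<or> y = Vs 3"
    and "F_adj k (Vs 3) y \<longleftrightarrow> y = C 1 \<or> y = Vs 2"
  using assms by (auto simp: F_adj_def F_edges_def G_edges_def)

(* The path
   vertices form level 0: v_1 and v_3 play the roles of b_0 and d_0 (they are the
   predecessors of a_1 and c_1), and v_2 forms the a/c-part of that level. *)
definition bd_level :: "nat \<Rightarrow> vtx set" where
  "bd_level j = (if j = 0 then {Vs 1, Vs 3} else {B j, D j})"

definition ac_level :: "nat \<Rightarrow> vtx set" where
  "ac_level j = (if j = 0 then {Vs 2} else {A j, C j})"

lemma card_bd_level: "card (bd_level j) = 2"
  by (simp add: bd_level_def)

lemma card_inter_pair:
  assumes "card X = 2"
  shows "card (S \<inter> X) = 0 \<longleftrightarrow> S \<inter> X = {}" and "2 \<le> card (S \<inter> X) \<longleftrightarrow> X \<subseteq> S"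
proof -
  have fin: "finite X" using assms card.infinite by fastforce
  then show "card (S \<inter> X) = 0 \<longleftrightarrow> S \<inter> X = {}" by simp
  have "card (S \<inter> X) \<le> 2" using fin assms card_mono[of X "S \<inter> X"] by auto
  moreover have "X \<subseteq> S \<Longrightarrow> S \<inter> X = X" by blast
  ultimately show "2 \<le> card (S \<inter> X) \<longleftrightarrow> X \<subseteq> S"
    using fin assms card_subset_eq[of X "S \<inter> X"] by auto
qed

(* The levels are pairwise disjoint, so S has at least as many elements as it has on
   all levels together. *)
lemma card_levels_le:
  assumes "finite S"
  shows "(\<Sum>j=0..k. card (S \<inter> bd_level j) + card (S \<inter> ac_level j)) \<le> card S"
proof -
  define L where "L j = S \<inter> (bd_level j \<union> ac_level j)" for j
  have "card (L j) = card (S \<inter> bd_level j) + card (S \<inter> ac_level j)" for j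
  proof -
    have "L j = (S \<inter> bd_level j) \<union> (S \<inter> ac_level j)" by (auto simp: L_def)
    moreover have "bd_level j \<inter> ac_level j = {}" by (auto simp: bd_level_def ac_level_def)
    ultimately show ?thesis using assms by (simp add: card_Un_disjoint disjoint_iff)
  qed
  moreover have "card (\<Union>j\<in>{0..k}. L j) = (\<Sum>j=0..k. card (L j))"
    using assms by (intro card_UN_disjoint) (auto simp: L_def bd_level_def ac_level_def split: if_splits)
  moreover have "card (\<Union>j\<in>{0..k}. L j) \<le> card S"
    using assms by (intro card_mono) (auto simp: L_def)
  ultimately show ?thesis by simp
qed

(* The following lemmas only use that S dominates the ladder vertices, i.e. all vertices
   but v_1, v_2, v_3; this is what TD-sets of F_k, TD-sets of F_k - w and ATD-sets with
   respect to a path vertex w have in common. *)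
context
  fixes k :: nat and S :: "vtx set"
  assumes k: "1 \<le> k"
    and dom: "dominates (F_adj k) S (F_verts k - {Vs 1, Vs 2, Vs 3})"
begin

lemma ladder_dominated:
  assumes "1 \<le> i" "i \<le> k"
  shows "\<exists>u\<in>S. F_adj k (A i) u" "\<exists>u\<in>S. F_adj k (B i) u"
    "\<exists>u\<in>S. F_adj k (C i) u" "\<exists>u\<in>S. F_adj k (D i) u"
  using dom assms by (auto simp: dominates_def F_verts_def)

(* If S misses b_{i+1} and d_{i+1}, then a_{i+1} and c_{i+1} can only be dominated
   from level i, so both b_i and d_i lie in S. *)
lemma bd_gap:
  assumes "i < k" "S \<inter> bd_level (Suc i) = {}"
  shows "bd_level i \<subseteq> S"
proof -
  have "B (Suc i) \<notin> S" "D (Suc i) \<notin> S" using assms(2) by (auto simp: bd_level_def)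
  moreover obtain y z where "y \<in> S" "F_adj k (A (Suc i)) y" "z \<in> S" "F_adj k (C (Suc i)) z"
    using ladder_dominated[of "Suc i"] assms(1) by auto
  ultimately show ?thesis using assms(1) k
    by (auto simp: adj_A adj_C bd_level_def split: if_splits)
qed

(* If S misses a_i and c_i, then b_i and d_i can only be dominated by a_{i+1} and
   c_{i+1}. *)
lemma ac_gap:
  assumes "1 \<le> i" "i < k" "S \<inter> ac_level i = {}"
  shows "ac_level (Suc i) \<subseteq> S"
proof -
  have "A i \<notin> S" "C i \<notin> S" using assms(1,3) by (auto simp: ac_level_def)
  moreover obtain y z where "y \<in> S" "F_adj k (B i) y" "z \<in> S" "F_adj k (D i) z"
    using ladder_dominated[of i] assms(1,2) by auto
  ultimately show ?thesis using assms(1,2) k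
    by (auto simp: adj_B adj_D ac_level_def split: if_splits)
qed

(* At the end of the ladder b_k and d_k are adjacent, so missing a_k and c_k forces
   b_k and d_k into S. *)
lemma ac_last_gap:
  assumes "S \<inter> ac_level k = {}"
  shows "bd_level k \<subseteq> S"
proof -
  have "A k \<notin> S" "C k \<notin> S" using assms k by (auto simp: ac_level_def)
  moreover obtain y z where "y \<in> S" "F_adj k (B k) y" "z \<in> S" "F_adj k (D k) z"
    using ladder_dominated[of k] k by auto
  ultimately show ?thesis using k
    by (auto simp: adj_B adj_D bd_level_def split: if_splits)
qed

(* The b/d-counts form a forward chain over levels 0..k
   (bd_gap) and the a/c-counts a backward chain over levels 1..k (ac_gap); a missing
   a/c-pair at level k is paid for by the full b/d-pair there (ac_last_gap).  Summing
   over the disjoint levels gives 2k plus one for each of: S meets {v_1, v_3};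
   S contains a_1 and c_1; S contains v_2. *)
lemma ladder_lower_bound:
  assumes "S \<subseteq> F_verts k"
  shows "2 * k + of_bool (S \<inter> {Vs 1, Vs 3} \<noteq> {}) + of_bool ({A 1, C 1} \<subseteq> S)
           + of_bool (Vs 2 \<in> S) \<le> card S"
proof -
  have fin: "finite S" using assms finite_F_verts finite_subset by blast
  define t where "t j = card (S \<inter> bd_level j)" for j
  define u where "u j = card (S \<inter> ac_level j)" for j
  have t_empty: "t j = 0 \<longleftrightarrow> S \<inter> bd_level j = {}" and t_full: "2 \<le> t j \<longleftrightarrow> bd_level j \<subseteq> S" for j
    unfolding t_def by (rule card_inter_pair[OF card_bd_level])+
  have u_empty: "u j = 0 \<longleftrightarrow> S \<inter> ac_level j = {}" for j
    unfolding u_def by (simp add: ac_level_def)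
  have "k - 0 + 1 + of_bool (2 \<le> t k) \<le> (\<Sum>j=0..k. t j) + of_bool (t 0 = 0)"
  proof (rule chain_sum_forward)
    fix i assume "0 \<le> i" "i < k" "t (Suc i) = 0"
    then show "2 \<le> t i" using bd_gap t_empty t_full by simp
  qed simp
  moreover have "k - 1 + 1 + of_bool (2 \<le> u 1) \<le> (\<Sum>j=1..k. u j) + of_bool (u k = 0)"
  proof (rule chain_sum_backward)
    fix i assume "1 \<le> i" "i < k" "u i = 0"
    then have "ac_level (Suc i) \<subseteq> S" using ac_gap u_empty by simp
    then show "2 \<le> u (Suc i)" unfolding u_def by (simp add: ac_level_def card_inter_pair)
  qed (rule k)
  moreover have "u k = 0 \<Longrightarrow> 2 \<le> t k" using ac_last_gap t_full u_empty by simp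
  moreover have "(\<Sum>j=0..k. t j) + (\<Sum>j=0..k. u j) \<le> card S"
    using card_levels_le[OF fin, of k] by (simp add: t_def u_def sum.distrib)
  moreover have "(\<Sum>j=0..k. u j) = u 0 + (\<Sum>j=1..k. u j)"
    by (simp add: sum.atLeast_Suc_atMost)
  ultimately have "2 * k + of_bool (t 0 \<noteq> 0) + of_bool (2 \<le> u 1) + u 0 \<le> card S"
    using k unfolding of_bool_def by (simp split: if_splits)
  moreover have "t 0 = 0 \<longleftrightarrow> S \<inter> {Vs 1, Vs 3} = {}" using t_empty by (simp add: bd_level_def)
  moreover have "2 \<le> u 1 \<longleftrightarrow> {A 1, C 1} \<subseteq> S"
    unfolding u_def by (simp add: ac_level_def card_inter_pair)
  moreover have "u 0 = of_bool (Vs 2 \<in> S)" by (simp add: u_def ac_level_def)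
  ultimately show ?thesis by simp
qed

end

lemma is_TDS_del_vertex:
  "is_TDS (V - {w}) (del_vertex_adj V E w) S \<longleftrightarrow> S \<subseteq> V - {w} \<and> dominates E S (V - {w})"
  unfolding is_TDS_def dominates_def del_vertex_adj_def by blast

lemma card_two_rungs:
  assumes "inj f" "inj g" "range f \<inter> range g = {}" "X \<inter> (range f \<union> range g) = {}" "finite X"
  shows "card (X \<union> f ` {1..k} \<union> g ` {1..k}) = card X + 2 * k"
proof -
  have "card (f ` {1..k}) = k" "card (g ` {1..k}) = k"
    using assms(1,2) by (simp_all add: card_image inj_on_subset)
  moreover have "X \<inter> f ` {1..k} = {}" "(X \<union> f ` {1..k}) \<inter> g ` {1..k} = {}"
    using assms(3,4) by blast+
  ultimately show ?thesis using assms(5) by (simp add: card_Un_disjoint)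
qed

(* Each rung a_i b_i c_i d_i is a 4-cycle, which is totally dominated by any of its
   edges. *)
lemma rungs_dominate:
  assumes k: "1 \<le> k"
    and rungs: "\<forall>i\<in>{1..k}. A i \<in> S \<and> B i \<in> S \<or> B i \<in> S \<and> C i \<in> S \<or> A i \<in> S \<and> D i \<in> S"
    and v1: "Vs 1 \<notin> W \<Longrightarrow> A 1 \<in> S \<or> Vs 2 \<in> S"
    and v2: "Vs 2 \<notin> W \<Longrightarrow> Vs 1 \<in> S \<or> Vs 3 \<in> S"
    and v3: "Vs 3 \<notin> W \<Longrightarrow> C 1 \<in> S \<or> Vs 2 \<in> S"
  shows "dominates (F_adj k) S (F_verts k - W)"
  unfolding dominates_def
proof
  fix x assume x: "x \<in> F_verts k - W"
  show "\<exists>u\<in>S. F_adj k x u"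
  proof (cases "x \<in> {Vs 1, Vs 2, Vs 3}")
    case True
    then show ?thesis using x v1 v2 v3 adj_Vs[OF k] by auto
  next
    case False
    then obtain i where i: "1 \<le> i" "i \<le> k" and "x \<in> {A i, B i, C i, D i}"
      using x k by (auto simp: F_verts_eq)
    moreover have "A i \<in> S \<and> B i \<in> S \<or> B i \<in> S \<and> C i \<in> S \<or> A i \<in> S \<and> D i \<in> S"
      using rungs i by auto
    ultimately show ?thesis using k by (auto simp: adj_A adj_B adj_C adj_D)
  qed
qed

lemma Vs_in_F_verts: "j \<in> {1, 2, 3} \<Longrightarrow> Vs j \<in> F_verts k"
  by (auto simp: F_verts_def)

(* Lower bound of (a): v_2 needs v_1 or v_3, and v_1, v_3 need v_2 or both a_1, c_1. *)
lemma TDS_lower_bound: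
  assumes k: "1 \<le> k" and S: "is_TDS (F_verts k) (F_adj k) S"
  shows "2 * k + 2 \<le> card S"
proof -
  have sub: "S \<subseteq> F_verts k" and dom: "dominates (F_adj k) S (F_verts k)"
    using S by (auto simp: is_TDS_def dominates_def)
  have subdiv: "\<exists>u\<in>S. F_adj k (Vs j) u" if "j \<in> {1, 2, 3}" for j
    using dom that Vs_in_F_verts[of j k] by (auto simp: dominates_def)
  have "S \<inter> {Vs 1, Vs 3} \<noteq> {}" using subdiv[of 2] adj_Vs(2)[OF k] by blast
  moreover have "Vs 2 \<in> S \<or> {A 1, C 1} \<subseteq> S"
  proof -
    obtain u1 u3 where "u1 \<in> S" "F_adj k (Vs 1) u1" "u3 \<in> S" "F_adj k (Vs 3) u3"
      using subdiv[of 1] subdiv[of 3] by auto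
    then show ?thesis using adj_Vs(1,3)[OF k] by auto
  qed
  moreover have "dominates (F_adj k) S (F_verts k - {Vs 1, Vs 2, Vs 3})"
    using dom by (auto simp: dominates_def)
  ultimately show ?thesis using ladder_lower_bound[OF k _ sub] by fastforce
qed

(* If w is not v_2, then v_2 needs v_1 or v_3;
   if w = v_2, then v_1 and v_3 need v_2 or both a_1, c_1. *)
lemma almost_TDS_lower_bound:
  assumes k: "1 \<le> k" and w: "w \<in> {Vs 1, Vs 2, Vs 3}"
    and sub: "S \<subseteq> F_verts k" and dom: "dominates (F_adj k) S (F_verts k - {w})"
  shows "2 * k + 1 \<le> card S"
proof -
  have subdiv: "\<exists>u\<in>S. F_adj k (Vs j) u" if "j \<in> {1, 2, 3}" "Vs j \<noteq> w" for j
    using dom that Vs_in_F_verts[of j k] by (auto simp: dominates_def)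
  have "S \<inter> {Vs 1, Vs 3} \<noteq> {} \<or> {A 1, C 1} \<subseteq> S \<or> Vs 2 \<in> S"
  proof (cases "Vs 2 = w")
    case True
    then obtain u1 u3 where "u1 \<in> S" "F_adj k (Vs 1) u1" "u3 \<in> S" "F_adj k (Vs 3) u3"
      using subdiv[of 1] subdiv[of 3] by auto
    then show ?thesis using adj_Vs(1,3)[OF k] by auto
  next
    case False
    then show ?thesis using subdiv[of 2] adj_Vs(2)[OF k] by blast
  qed
  moreover have "dominates (F_adj k) S (F_verts k - {Vs 1, Vs 2, Vs 3})"
    using dom w by (auto simp: dominates_def)
  ultimately show ?thesis using ladder_lower_bound[OF k _ sub] by fastforce
qed

lemma TDS_witness:
  assumes k: "1 \<le> k"
  shows "\<exists>S. is_TDS (F_verts k) (F_adj k) S \<and> card S = 2 * k + 2"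
proof -
  let ?S = "{Vs 1, Vs 2} \<union> A ` {1..k} \<union> B ` {1..k}"
  have "dominates (F_adj k) ?S (F_verts k - {})"
    by (rule rungs_dominate[OF k]) (use k in auto)
  moreover have "?S \<subseteq> F_verts k" using k by (auto simp: F_verts_eq)
  ultimately have "is_TDS (F_verts k) (F_adj k) ?S" by (simp add: is_TDS_def dominates_def)
  moreover have "card ?S = 2 * k + 2" by (subst card_two_rungs) (auto simp: inj_def)
  ultimately show ?thesis by blast
qed

lemma deleted_TDS_witness:
  assumes k: "1 \<le> k" and w: "w \<in> {Vs 1, Vs 2, Vs 3}"
  shows "\<exists>S. S \<subseteq> F_verts k - {w} \<and> dominates (F_adj k) S (F_verts k - {w}) \<and> card S = 2 * k + 1"
proof -
  obtain x f g where witness: "(w, x, f, g) \<in> {(Vs 1, Vs 3, B, C), (Vs 2, C 1, A, B), (Vs 3, Vs 1, A, D)}"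
    using w by auto
  let ?S = "{x} \<union> f ` {1..k} \<union> g ` {1..k}"
  have "dominates (F_adj k) ?S (F_verts k - {w})"
    by (rule rungs_dominate[OF k]) (use witness k in auto)
  moreover have "?S \<subseteq> F_verts k - {w}" using k witness by (auto simp: F_verts_eq)
  moreover have "card ?S = 2 * k + 1"
    using witness by (subst card_two_rungs) (auto simp: inj_def)
  ultimately show ?thesis by blast
qed

lemma ATDS_witness:
  assumes k: "1 \<le> k" and w: "w \<in> {Vs 1, Vs 2, Vs 3}"
  shows "\<exists>S. is_ATDS (F_verts k) (F_adj k) w S \<and> card S = 2 * k + 1"
proof -
  obtain f g where witness: "(w, f, g) \<in> {(Vs 1, B, C), (Vs 2, A, B), (Vs 3, A, D)}"
    using w by auto
  let ?S = "{w} \<union> f ` {1..k} \<union> g ` {1..k}"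
  have "dominates (F_adj k) ?S (F_verts k - {w})"
    by (rule rungs_dominate[OF k]) (use witness k in auto)
  moreover have "?S \<subseteq> F_verts k" using k witness by (auto simp: F_verts_eq)
  moreover have "\<forall>u\<in>?S. \<not> F_adj k w u" \<comment> \<open>keep the numeral 1 folded so that adj_Vs applies\<close>
    using witness by (auto simp: adj_Vs[OF k] simp del: One_nat_def)
  ultimately have "is_ATDS (F_verts k) (F_adj k) w ?S" by (simp add: is_ATDS_def dominates_def)
  moreover have "card ?S = 2 * k + 1"
    using witness by (subst card_two_rungs) (auto simp: inj_def)
  ultimately show ?thesis by blast
qed

lemma gamma_t_F: "gamma_t (F_verts k) (F_adj k) = 2 * k + 2"
proof (cases "k = 0")
  case True
  have "gamma_t (F_verts 0) (F_adj 0) = 2"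
  proof (rule gamma_t_eqI)
    have "is_TDS (F_verts 0) (F_adj 0) {Vs 1, Vs 2}"
      by (auto simp: is_TDS_def F_verts_def F_adj_def F_edges_def)
    then show "\<exists>S. is_TDS (F_verts 0) (F_adj 0) S \<and> card S = 2" by fastforce
    show "2 \<le> card S" if "is_TDS (F_verts 0) (F_adj 0) S" for S
      by (rule TDS_card_ge_2[OF that finite_F_verts]) (auto simp: F_verts_def F_adj_def F_edges_def)
  qed
  then show ?thesis using True by simp
next
  case False
  then show ?thesis using TDS_witness TDS_lower_bound by (intro gamma_t_eqI) auto
qed

lemma gamma_subdivision_vertex:
  assumes k: "1 \<le> k" and w: "w \<in> {Vs 1, Vs 2, Vs 3}"
  shows "gamma_t (F_verts k - {w}) (del_vertex_adj (F_verts k) (F_adj k) w) = 2 * k + 1"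
    and "gamma_ta (F_verts k) (F_adj k) w = 2 * k + 1"
proof -
  show "gamma_t (F_verts k - {w}) (del_vertex_adj (F_verts k) (F_adj k) w) = 2 * k + 1"
    using deleted_TDS_witness[OF k w] almost_TDS_lower_bound[OF k w]
    by (intro gamma_t_eqI) (auto simp: is_TDS_del_vertex)
  show "gamma_ta (F_verts k) (F_adj k) w = 2 * k + 1"
    using ATDS_witness[OF k w] almost_TDS_lower_bound[OF k w]
    by (intro gamma_ta_eqI) (auto simp: is_ATDS_def dominates_def)
qed

theorem mainTheorem3:
  fixes k :: nat
  shows "card (F_verts k) = 4 * k + 3
    \<and> real (gamma_t (F_verts k) (F_adj k)) = (real (card (F_verts k)) + 1) / 2
    \<and> (k \<ge> 1 \<longrightarrow> (\<forall>w \<in> {Vs 1, Vs 2, Vs 3}.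
          real (gamma_t (F_verts k - {w}) (del_vertex_adj (F_verts k) (F_adj k) w))
            = (real (card (F_verts k)) - 1) / 2
        \<and> real (gamma_ta (F_verts k) (F_adj k) w) = (real (card (F_verts k)) - 1) / 2))"
  using card_F_verts gamma_t_F gamma_subdivision_vertex by simp

end
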